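(* Let $k\ge0$ be an integer and let $X_{0,k}\subseteq\{0,1\}^{\mathbb{Z}}$ be the $(0,k)$-RLL system, i.e., the set of binary bi-infinite sequences containing no $k+1$ consecutive zeros. Let $\mu^{\mathsf{u}}$ be the uniform Bernoulli i.i.d. measure on $\{0,1\}^{\mathbb{Z}}$. Then \[R_0(X_{0,k},\{0,1\}^{\mathbb{Z}},\mu^{\mathsf{u}})=\frac{1}{2(2^{k+1}-1)}.\]
   Context: For a shift space $X$, $\mathscr{B}_n(X)$ is the set of length-$n$ words appearing as consecutive subwords of elements of $X$. $d$ is the Hamming distance, $B_r(\overline{x})$ the Hamming ball. For $A,C\subseteq\Sigma^n$, a probability measure $\eta$ on $\Sigma^n$ and $\varepsilon>0$: $R_\varepsilon(C,A,\eta)=\min\{r\in\mathbb{Z}_{\ge0}:\eta(A\cap\bigcup_{\overline{x}\in C}B_r(\overline{x}))\ge1-\varepsilon\}$. For shift spaces $X,Y$ and a shift-invariant ergodic probability measure $\mu$ on $Y$ with marginal $\mu_n$ on coordinates $0,\dots,n-1$: $R_\varepsilon(X,Y,\mu)=\liminf_n\frac1nR_\varepsilon(\mathscr{B}_n(X),\mathscr{B}_n(Y),\mu_n)$ and $R_0(X,Y,\mu)=\lim_{\varepsilon\to0}R_\varepsilon(X,Y,\mu)$. *)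

theory Defs
  imports "HOL-Probability.Probability"
begin

definition hamming :: "'a list \<Rightarrow> 'a list \<Rightarrow> nat" where
  "hamming xs ys = card {i. i < length xs \<and> xs ! i \<noteq> ys ! i}"

definition hball :: "nat \<Rightarrow> 'a list \<Rightarrow> 'a list set" where
  "hball r xs = {ys. length ys = length xs \<and> hamming xs ys \<le> r}"

definition language :: "(int \<Rightarrow> 'a) set \<Rightarrow> nat \<Rightarrow> 'a list set" where
  "language X n = {map (\<lambda>j. x (i + int j)) [0..<n] | x i. x \<in> X}"

definition R_words :: "real \<Rightarrow> 'a list set \<Rightarrow> 'a list set \<Rightarrow> 'a list pmf \<Rightarrow> nat" where
  "R_words \<epsilon> C A \<eta> =
     (LEAST r::nat. measure_pmf.prob \<eta> (A \<inter> (\<Union>x\<in>C. hball r x)) \<ge> 1 - \<epsilon>)"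

text \<open>R_eps(X, Y, mu), where the measure mu on Y is given through its family of
  marginals mu_n on the coordinates 0..n-1 (a measure on length-n words).\<close>

definition R_shift :: "real \<Rightarrow> (int \<Rightarrow> 'a) set \<Rightarrow> (int \<Rightarrow> 'a) set \<Rightarrow> (nat \<Rightarrow> 'a list pmf) \<Rightarrow> ereal" where
  "R_shift \<epsilon> X Y \<mu>n =
     liminf (\<lambda>n. ereal (real (R_words \<epsilon> (language X n) (language Y n) (\<mu>n n)) / real n))"

text \<open>The (0,k)-RLL system over {0,1} (False = 0, True = 1): no k+1 consecutive zeros.\<close>

definition RLL :: "nat \<Rightarrow> (int \<Rightarrow> bool) set" where
  "RLL k = {x. \<not> (\<exists>i. \<forall>j<k+1. x (i + int j) = False)}"

definition full_shift :: "(int \<Rightarrow> bool) set" where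
  "full_shift = UNIV"

text \<open>Marginal of the uniform Bernoulli i.i.d. measure on coordinates 0..n-1:
  the uniform distribution on binary words of length n.\<close>

definition uniform_marginal :: "nat \<Rightarrow> bool list pmf" where
  "uniform_marginal n = pmf_of_set {w. length w = n}"

end

theory Submission
  imports Defs "HOL-Real_Asymp.Real_Asymp"
begin

text \<open>The Hamming distance from a word to the (0,k)-RLL language is computed exactly by the greedy
  repair which flips every zero that would complete a run of k+1 zeros. For a uniformly random
  word, the number of greedy flips, corrected by a bounded potential of the current run length,
  is a sum of mean-zero bounded increments driven by fair coins. Its variance is therefore O(n),
  and by Chebyshev's inequality the distance is concentrated at c n with
  c = 1/(2(2^(k+1)-1)), the stationary flip rate. Hence for every 0 < eps < 1 the
  (1-eps)-quantile of the distance, divided by n, tends to c, and R_eps = c.\<close>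

section \<open>Binary words and Hamming distance\<close>

lemma hamming_Nil [simp]: "hamming [] ys = 0"
  by (simp add: hamming_def)

lemma hamming_Cons [simp]:
  "hamming (a # xs) (b # ys) = (if a = b then 0 else 1) + hamming xs ys"
proof -
  have split: "{i. i < length (a # xs) \<and> (a # xs) ! i \<noteq> (b # ys) ! i}
     = {i. i = 0 \<and> a \<noteq> b} \<union> Suc ` {i. i < length xs \<and> xs ! i \<noteq> ys ! i}"
    by (auto simp: image_iff less_Suc_eq_0_disj)
  have "card ({i::nat. i = 0 \<and> a \<noteq> b} \<union> Suc ` {i. i < length xs \<and> xs ! i \<noteq> ys ! i})
      = card {i::nat. i = 0 \<and> a \<noteq> b} + card (Suc ` {i. i < length xs \<and> xs ! i \<noteq> ys ! i})"
    by (intro card_Un_disjoint) (auto intro: finite_subset[of _ "{0}"])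
  then show ?thesis
    unfolding hamming_def[of "a # xs"] split by (simp add: card_image hamming_def)
qed

lemma hamming_commute: "length xs = length ys \<Longrightarrow> hamming xs ys = hamming ys xs"
  unfolding hamming_def by (metis (mono_tags, lifting))

lemma finite_bool_words: "finite {w :: bool list. length w = n}"
  using finite_lists_length_eq[of "UNIV :: bool set" n] by simp

lemma card_bool_words: "card {w :: bool list. length w = n} = 2 ^ n"
  using card_lists_length_eq[of "UNIV :: bool set" n] by simp

lemma bool_words_nonempty: "{w :: bool list. length w = n} \<noteq> {}"
  by (simp add: Ex_list_of_length)

lemma sum_bool_words_Suc:
  "(\<Sum>w | length w = Suc n. F w) = (\<Sum>w | length w = n. F (True # w) + F (False # w))"
proof -
  have words: "{w. length w = Suc n} = Cons True ` {w. length w = n} \<union> Cons False ` {w. length w = n}"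
    by (auto simp: length_Suc_conv image_iff)
  have "(\<Sum>w | length w = Suc n. F w)
      = (\<Sum>w\<in>Cons True ` {w. length w = n}. F w) + (\<Sum>w\<in>Cons False ` {w. length w = n}. F w)"
    unfolding words by (rule sum.union_disjoint) (auto simp: finite_bool_words)
  then show ?thesis
    by (simp add: sum.reindex sum.distrib)
qed

lemma language_UNIV: "language UNIV n = {w. length w = n}"
proof (rule set_eqI, rule iffI)
  fix w :: "'a list" assume "w \<in> {w. length w = n}"
  then show "w \<in> language UNIV n"
    unfolding language_def
    by (intro CollectI exI[of _ "\<lambda>i. w ! nat i"] exI[of _ "0::int"]) (auto intro!: nth_equalityI)
qed (auto simp: language_def)

section \<open>Greedy repair into the RLL language\<close>

definition rll_word :: "nat \<Rightarrow> bool list \<Rightarrow> bool" where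
  "rll_word k v \<longleftrightarrow> \<not> (\<exists>i. i + Suc k \<le> length v \<and> (\<forall>t<Suc k. \<not> v ! (i + t)))"

lemma rll_word_window:
  assumes "x \<in> RLL k"
  shows "rll_word k (map (\<lambda>j. x (i + int j)) [0..<n])"
  unfolding rll_word_def
proof
  assume "\<exists>p. p + Suc k \<le> length (map (\<lambda>j. x (i + int j)) [0..<n])
    \<and> (\<forall>t<Suc k. \<not> map (\<lambda>j. x (i + int j)) [0..<n] ! (p + t))"
  then obtain p where "p + Suc k \<le> n" "\<forall>t<Suc k. \<not> x (i + int (p + t))"
    by auto
  then have "\<forall>t<k + 1. x ((i + int p) + int t) = False"
    by (simp add: add.assoc)
  then show False
    using assms unfolding RLL_def by blast
qed

lemma rll_word_padding:
  assumes "rll_word k v"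
  shows "(\<lambda>i::int. if 0 \<le> i \<and> i < int (length v) then v ! nat i else True) \<in> RLL k"
    (is "?x \<in> _")
  unfolding RLL_def
proof (clarify)
  fix i assume zeros: "\<forall>j<k + 1. ?x (i + int j) = False"
  have inside: "0 \<le> i + int t \<and> i + int t < int (length v) \<and> \<not> v ! nat (i + int t)"
    if "t < k + 1" for t
    using zeros[rule_format, OF that] by (auto split: if_splits)
  then have "0 \<le> i"
    using inside[of 0] by simp
  moreover have "int (nat i + k) < int (length v)"
    using inside[of k] \<open>0 \<le> i\<close> by simp
  then have "nat i + Suc k \<le> length v"
    by linarith
  moreover have "\<forall>t<Suc k. \<not> v ! (nat i + t)"
    using inside \<open>0 \<le> i\<close> by (simp add: nat_add_distrib)
  ultimately show False
    using assms unfolding rll_word_def by blast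
qed

lemma language_RLL: "language (RLL k) n = {v. length v = n \<and> rll_word k v}"
proof (rule set_eqI, rule iffI)
  fix v assume "v \<in> language (RLL k) n"
  then show "v \<in> {v. length v = n \<and> rll_word k v}"
    unfolding language_def using rll_word_window by auto
next
  fix v assume v: "v \<in> {v. length v = n \<and> rll_word k v}"
  define x where "x = (\<lambda>i::int. if 0 \<le> i \<and> i < int (length v) then v ! nat i else True)"
  have "x \<in> RLL k"
    unfolding x_def using v by (intro rll_word_padding) simp
  moreover have "v = map (\<lambda>j. x (0 + int j)) [0..<n]"
    using v by (intro nth_equalityI) (auto simp: x_def)
  ultimately show "v \<in> language (RLL k) n"
    unfolding language_def by blast
qed

lemma not_rll_word_zeros: "\<not> rll_word k (replicate (Suc k) False @ v)"
  unfolding rll_word_def by (simp, intro exI[of _ 0]) (auto simp: nth_Cons' nth_append)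

lemma rll_word_appendD: "rll_word k (xs @ ys) \<Longrightarrow> rll_word k ys"
  unfolding rll_word_def
proof (elim contrapos_nn exE conjE)
  fix i assume "i + Suc k \<le> length ys" "\<forall>t<Suc k. \<not> ys ! (i + t)"
  then show "\<exists>i. i + Suc k \<le> length (xs @ ys) \<and> (\<forall>t<Suc k. \<not> (xs @ ys) ! (i + t))"
    by (intro exI[of _ "length xs + i"]) (auto simp: nth_append add.assoc)
qed

lemma rll_word_zeros_True_Cons:
  assumes "j \<le> k" and "rll_word k ys"
  shows "rll_word k (replicate j False @ True # ys)"
  using assms(2) unfolding rll_word_def
proof (elim contrapos_nn exE conjE)
  fix i assume len: "i + Suc k \<le> length (replicate j False @ True # ys)"
    and zeros: "\<forall>t<Suc k. \<not> (replicate j False @ True # ys) ! (i + t)"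
  show "\<exists>i. i + Suc k \<le> length ys \<and> (\<forall>t<Suc k. \<not> ys ! (i + t))"
  proof (cases "i \<le> j")
    case True
    then have "(replicate j False @ True # ys) ! (i + (j - i))"
      by (simp add: nth_append)
    moreover have "j - i < Suc k"
      using \<open>j \<le> k\<close> by simp
    ultimately show ?thesis
      using zeros by blast
  next
    case False
    have "\<not> ys ! (i - Suc j + t)" if "t < Suc k" for t
    proof -
      have "i + t - j = Suc (i - Suc j + t)"
        using False by simp
      then show ?thesis
        using zeros[rule_format, OF that] False by (simp add: nth_append)
    qed
    then show ?thesis
      using len False by (intro exI[of _ "i - Suc j"]) auto
  qed
qed

text \<open>The greedy automaton reads a word from left to right; its state j counts the zeros at the
  end of the repaired prefix, and a zero read in state k is flipped to a one.\<close>

definition rll_step :: "nat \<Rightarrow> nat \<Rightarrow> bool \<Rightarrow> nat" where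
  "rll_step k j b = (if b \<or> j = k then 0 else Suc j)"

fun rll_flips :: "nat \<Rightarrow> nat \<Rightarrow> bool list \<Rightarrow> nat" where
  "rll_flips k j [] = 0"
| "rll_flips k j (b # w) = of_bool (\<not> b \<and> j = k) + rll_flips k (rll_step k j b) w"

fun rll_state :: "nat \<Rightarrow> nat \<Rightarrow> bool list \<Rightarrow> nat" where
  "rll_state k j [] = j"
| "rll_state k j (b # w) = rll_state k (rll_step k j b) w"

fun rll_repair :: "nat \<Rightarrow> nat \<Rightarrow> bool list \<Rightarrow> bool list" where
  "rll_repair k j [] = []"
| "rll_repair k j (b # w) = (b \<or> j = k) # rll_repair k (rll_step k j b) w"

lemma rll_step_le: "j \<le> k \<Longrightarrow> rll_step k j b \<le> k"
  by (auto simp: rll_step_def)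

lemma rll_state_le: "j \<le> k \<Longrightarrow> rll_state k j w \<le> k"
  by (induction w arbitrary: j) (auto simp: rll_step_le)

lemma length_rll_repair [simp]: "length (rll_repair k j w) = length w"
  by (induction w arbitrary: j) auto

lemma hamming_rll_repair: "hamming w (rll_repair k j w) = rll_flips k j w"
  by (induction w arbitrary: j) (auto simp: rll_step_def)

lemma rll_word_rll_repair: "j \<le> k \<Longrightarrow> rll_word k (replicate j False @ rll_repair k j w)"
proof (induction w arbitrary: j)
  case Nil
  then show ?case by (simp add: rll_word_def)
next
  case (Cons b w)
  show ?case
  proof (cases "b \<or> j = k")
    case True
    have "rll_word k (rll_repair k 0 w)"
      using Cons.IH[of 0] by simp
    then show ?thesis
      using True Cons.prems rll_word_zeros_True_Cons[of j k "rll_repair k 0 w"]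
      by (simp add: rll_step_def)
  next
    case False
    then show ?thesis
      using Cons.prems Cons.IH[of "Suc j"]
      by (simp add: rll_step_def replicate_app_Cons_same)
  qed
qed

lemma rll_flips_start_mono:
  assumes "j \<le> j'" and "j' \<le> k"
  shows "rll_flips k j w \<le> rll_flips k j' w \<and> rll_flips k j' w \<le> rll_flips k j w + 1"
  using assms
proof (induction w arbitrary: j j')
  case Nil
  then show ?case by simp
next
  case (Cons b w)
  show ?case
  proof (cases "b \<or> j' < k")
    case True
    then show ?thesis
      using Cons.prems Cons.IH[of "Suc j" "Suc j'"] by (auto simp: rll_step_def)
  next
    case False
    then have "j' = k" "\<not> b"
      using Cons.prems by auto
    then show ?thesis
      using Cons.prems Cons.IH[of 0 "Suc j"] Cons.IH[of 0 0] by (auto simp: rll_step_def)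
  qed
qed

lemma rll_flips_le_hamming:
  "j \<le> k \<Longrightarrow> length v = length w \<Longrightarrow> rll_word k (replicate j False @ v)
    \<Longrightarrow> rll_flips k j w \<le> hamming w v"
proof (induction w arbitrary: j v)
  case Nil
  then show ?case by simp
next
  case (Cons b w)
  then obtain c v' where v: "v = c # v'"
    by (cases v) auto
  have len: "length v' = length w"
    using Cons.prems v by simp
  have "rll_word k v'"
    using Cons.prems(3) rll_word_appendD[of k "replicate j False @ [c]" v'] v by simp
  then have from_0: "rll_flips k 0 w \<le> hamming w v'"
    using Cons.IH[of 0 v'] len by simp
  show ?case
  proof (cases "b \<or> c")
    case True
    have "j < k \<Longrightarrow> rll_flips k (Suc j) w \<le> rll_flips k 0 w + 1"
      using rll_flips_start_mono[of 0 "Suc j" k w] by simp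
    then show ?thesis
      using True Cons.prems(1) from_0 v by (auto simp: rll_step_def)
  next
    case False
    have "j \<noteq> k"
      using Cons.prems(3) False v not_rll_word_zeros[of k v'] by (auto simp: replicate_app_Cons_same)
    then have "rll_flips k (Suc j) w \<le> hamming w v'"
      using Cons.IH[of "Suc j" v'] Cons.prems len v False
      by (simp add: replicate_app_Cons_same)
    then show ?thesis
      using v False \<open>j \<noteq> k\<close> by (simp add: rll_step_def)
  qed
qed

lemma RLL_neighbourhood:
  "language full_shift n \<inter> (\<Union>x\<in>language (RLL k) n. hball r x)
    = {w. length w = n \<and> rll_flips k 0 w \<le> r}"
proof (rule set_eqI, rule iffI)
  fix w assume "w \<in> language full_shift n \<inter> (\<Union>x\<in>language (RLL k) n. hball r x)"
  then obtain v where w: "length w = n" and v: "length v = n" "rll_word k v"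
    and close: "hamming v w \<le> r"
    unfolding full_shift_def language_UNIV language_RLL hball_def by auto
  have "rll_flips k 0 w \<le> hamming v w"
    using rll_flips_le_hamming[of 0 k v w] v w hamming_commute[of v w] by simp
  then show "w \<in> {w. length w = n \<and> rll_flips k 0 w \<le> r}"
    using close w by simp
next
  fix w assume "w \<in> {w. length w = n \<and> rll_flips k 0 w \<le> r}"
  then have w: "length w = n" and flips: "rll_flips k 0 w \<le> r"
    by auto
  have "hamming (rll_repair k 0 w) w = rll_flips k 0 w"
    using hamming_rll_repair[of w k 0] hamming_commute[of w] by simp
  then have "w \<in> hball r (rll_repair k 0 w)"
    using flips unfolding hball_def by simp
  moreover have "rll_repair k 0 w \<in> language (RLL k) n"
    using w rll_word_rll_repair[of 0 k w] unfolding language_RLL by simp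
  ultimately show "w \<in> language full_shift n \<inter> (\<Union>x\<in>language (RLL k) n. hball r x)"
    using w unfolding full_shift_def language_UNIV by blast
qed

section \<open>Quantiles of concentrated statistics\<close>

definition quantile :: "real \<Rightarrow> 'a pmf \<Rightarrow> ('a \<Rightarrow> nat) \<Rightarrow> nat" where
  "quantile \<epsilon> p X = (LEAST r. 1 - \<epsilon> \<le> measure_pmf.prob p {w. X w \<le> r})"

lemma quantile_bounds:
  fixes p :: "'a pmf" and X :: "'a \<Rightarrow> nat"
  assumes deviation: "measure_pmf.prob p {w. t \<le> \<bar>real (X w) - m\<bar>} < min \<epsilon> (1 - \<epsilon>)"
    and "0 \<le> m + t"
  shows "m - t < real (quantile \<epsilon> p X)" and "real (quantile \<epsilon> p X) \<le> m + t"
proof -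
  let ?D = "{w. t \<le> \<bar>real (X w) - m\<bar>}"
  define a where "a = nat \<lfloor>m + t\<rfloor>"
  have a: "real a \<le> m + t" "m + t < real a + 1"
    using \<open>0 \<le> m + t\<close> floor_correct[of "m + t"] by (simp_all add: a_def)
  have "UNIV - {w. X w \<le> a} \<subseteq> ?D"
  proof
    fix w assume "w \<in> UNIV - {w. X w \<le> a}"
    then have "real a + 1 \<le> real (X w)"
      by simp
    then show "w \<in> ?D"
      using a by (simp add: abs_if)
  qed
  then have "measure_pmf.prob p (UNIV - {w. X w \<le> a}) \<le> measure_pmf.prob p ?D"
    by (rule measure_pmf.finite_measure_mono) simp
  then have "1 - \<epsilon> \<le> measure_pmf.prob p {w. X w \<le> a}"
    using deviation measure_pmf.prob_compl[of "{w. X w \<le> a}" p] by simp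
  then have good: "1 - \<epsilon> \<le> measure_pmf.prob p {w. X w \<le> quantile \<epsilon> p X}"
    and "quantile \<epsilon> p X \<le> a"
    unfolding quantile_def by (rule LeastI, rule Least_le)
  then show "real (quantile \<epsilon> p X) \<le> m + t"
    using a by linarith
  show "m - t < real (quantile \<epsilon> p X)"
  proof (rule ccontr)
    assume "\<not> m - t < real (quantile \<epsilon> p X)"
    then have "{w. X w \<le> quantile \<epsilon> p X} \<subseteq> ?D"
      by (auto simp: abs_if)
    then have "measure_pmf.prob p {w. X w \<le> quantile \<epsilon> p X} \<le> measure_pmf.prob p ?D"
      by (rule measure_pmf.finite_measure_mono) simp
    then show False
      using good deviation by simp
  qed
qed

lemma quantile_over_n_tendsto:
  fixes p :: "nat \<Rightarrow> 'a pmf" and X :: "nat \<Rightarrow> 'a \<Rightarrow> nat"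
  assumes concentrated: "\<And>\<delta>. 0 < \<delta> \<Longrightarrow>
      (\<lambda>n. measure_pmf.prob (p n) {w. \<delta> * real n \<le> \<bar>real (X n w) - c * real n\<bar>}) \<longlonglongrightarrow> 0"
    and "0 \<le> c" and "0 < \<epsilon>" and "\<epsilon> < 1"
  shows "(\<lambda>n. real (quantile \<epsilon> (p n) (X n)) / real n) \<longlonglongrightarrow> c"
  unfolding tendsto_iff
proof (intro allI impI)
  fix r :: real assume "0 < r"
  then have "0 < r / 2" and "0 < min \<epsilon> (1 - \<epsilon>)"
    using assms by auto
  then have "eventually (\<lambda>n. measure_pmf.prob (p n)
      {w. r / 2 * real n \<le> \<bar>real (X n w) - c * real n\<bar>} < min \<epsilon> (1 - \<epsilon>)) sequentially"
    using order_tendstoD(2)[OF concentrated] by blast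
  then show "eventually (\<lambda>n. dist (real (quantile \<epsilon> (p n) (X n)) / real n) c < r) sequentially"
    using eventually_gt_at_top[of 0]
  proof eventually_elim
    case (elim n)
    from quantile_bounds[OF elim(1)] \<open>0 \<le> c\<close> \<open>0 < r\<close>
    have "c * n - r / 2 * n < quantile \<epsilon> (p n) (X n)"
      and "quantile \<epsilon> (p n) (X n) \<le> c * n + r / 2 * n"
      by auto
    with \<open>0 < r\<close> \<open>0 < n\<close> show ?case
      by (simp add: dist_real_def abs_less_iff field_simps)
  qed
qed

section \<open>Martingales driven by fair coins\<close>

fun walk_sum :: "('s \<Rightarrow> bool \<Rightarrow> 's) \<Rightarrow> ('s \<Rightarrow> bool \<Rightarrow> real) \<Rightarrow> 's \<Rightarrow> bool list \<Rightarrow> real" where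
  "walk_sum f D s [] = 0"
| "walk_sum f D s (b # w) = D s b + walk_sum f D (f s b) w"

locale fair_coin_martingale =
  fixes S :: "'s set" and f :: "'s \<Rightarrow> bool \<Rightarrow> 's" and D :: "'s \<Rightarrow> bool \<Rightarrow> real" and B :: real
  assumes step_closed: "s \<in> S \<Longrightarrow> f s b \<in> S"
    and mean_zero: "s \<in> S \<Longrightarrow> D s True + D s False = 0"
    and bounded: "s \<in> S \<Longrightarrow> \<bar>D s b\<bar> \<le> B"
begin

lemma sum_walk_sum_eq_0: "s \<in> S \<Longrightarrow> (\<Sum>w | length w = n. walk_sum f D s w) = 0"
proof (induction n arbitrary: s)
  case 0
  then show ?case by simp
next
  case (Suc n)
  have "(\<Sum>w | length w = Suc n. walk_sum f D s w)
      = 2 ^ n * (D s True + D s False)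
        + (\<Sum>w | length w = n. walk_sum f D (f s True) w)
        + (\<Sum>w | length w = n. walk_sum f D (f s False) w)"
    by (simp add: sum_bool_words_Suc sum.distrib card_bool_words algebra_simps)
  then show ?case
    using mean_zero Suc step_closed by simp
qed

text \<open>Orthogonality of the increments: the cross terms vanish since walk sums have mean zero.\<close>

lemma sum_walk_sum_square_le: "s \<in> S \<Longrightarrow> (\<Sum>w | length w = n. (walk_sum f D s w)\<^sup>2) \<le> B\<^sup>2 * real n * 2 ^ n"
proof (induction n arbitrary: s)
  case 0
  then show ?case by simp
next
  case (Suc n)
  let ?M = "\<lambda>b. \<Sum>w | length w = n. (walk_sum f D (f s b) w)\<^sup>2"
  have "(\<Sum>w | length w = Suc n. (walk_sum f D s w)\<^sup>2)
      = 2 ^ n * ((D s True)\<^sup>2 + (D s False)\<^sup>2) + ?M True + ?M False"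
    using sum_walk_sum_eq_0[OF step_closed[OF Suc.prems]]
    by (simp add: sum_bool_words_Suc power2_sum sum.distrib sum_distrib_left[symmetric]
        card_bool_words algebra_simps)
  also have "\<dots> \<le> 2 ^ n * (B\<^sup>2 + B\<^sup>2) + B\<^sup>2 * real n * 2 ^ n + B\<^sup>2 * real n * 2 ^ n"
    using power_mono[OF bounded[OF Suc.prems] abs_ge_zero, of _ 2] Suc.IH[OF step_closed[OF Suc.prems]]
    by (intro add_mono mult_left_mono) auto
  finally show ?case
    by (simp add: algebra_simps)
qed

end

section \<open>Concentration of the greedy distance\<close>

definition flip_rate :: "nat \<Rightarrow> real" where
  "flip_rate k = 1 / (2 * (2 ^ (k + 1) - 1))"

text \<open>The potential solves D(j,True) + D(j,False) = 0 for the increments below: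
  phi(0) = 0 and phi(j+1) = 2 phi(j) + 2c for j < k, while the flip at state k forces
  1 = 2 phi(k) + 2c, which pins down c = flip_rate k.\<close>

definition rll_potential :: "nat \<Rightarrow> nat \<Rightarrow> real" where
  "rll_potential k j = 2 * flip_rate k * (2 ^ j - 1)"

definition rll_increment :: "nat \<Rightarrow> nat \<Rightarrow> bool \<Rightarrow> real" where
  "rll_increment k j b = of_bool (\<not> b \<and> j = k)
     + rll_potential k (rll_step k j b) - rll_potential k j - flip_rate k"

lemma flip_rate_eq: "flip_rate k * (2 * 2 ^ k - 1) = 1 / 2"
proof -
  have "(1::real) < 2 * 2 ^ k"
    using one_le_power[of "2::real" k] by linarith
  then show ?thesis
    by (simp add: flip_rate_def)
qed

lemma flip_rate_pos: "0 < flip_rate k"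
proof -
  have "(1::real) < 2 * 2 ^ k"
    using one_le_power[of "2::real" k] by linarith
  then show ?thesis
    by (simp add: flip_rate_def)
qed

lemma flip_rate_le: "flip_rate k \<le> 1 / 2"
proof -
  have "(1::real) \<le> 2 * 2 ^ k - 1"
    using one_le_power[of "2::real" k] by linarith
  then show ?thesis
    using flip_rate_eq[of k] flip_rate_pos[of k] mult_left_mono[of 1 "2 * 2 ^ k - 1" "flip_rate k"]
    by linarith
qed

lemma rll_potential_bounds: "j \<le> k \<Longrightarrow> 0 \<le> rll_potential k j \<and> rll_potential k j < 1"
proof -
  assume "j \<le> k"
  then have "(2::real) ^ j \<le> 2 ^ k"
    by (rule power_increasing) simp
  then have "(2::real) ^ j - 1 < 2 * 2 ^ k - 1"
    using zero_less_power[of "2::real" k] by linarith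
  then have "2 * flip_rate k * (2 ^ j - 1) < 2 * flip_rate k * (2 * 2 ^ k - 1)"
    using flip_rate_pos[of k] by simp
  then show ?thesis
    using flip_rate_eq[of k] flip_rate_pos[of k] by (simp add: rll_potential_def)
qed

lemma walk_sum_rll_increment:
  "walk_sum (rll_step k) (rll_increment k) j w
    = rll_flips k j w + rll_potential k (rll_state k j w) - rll_potential k j - flip_rate k * length w"
proof (induction w arbitrary: j)
  case (Cons b w)
  then show ?case
    using Cons.IH[of "rll_step k j b"] by (simp add: rll_increment_def algebra_simps)
qed simp

interpretation rll: fair_coin_martingale "{..k}" "rll_step k" "rll_increment k" 2
proof
  fix j b assume "j \<in> {..k}"
  then show "rll_step k j b \<in> {..k}"
    using rll_step_le by simp
  show "rll_increment k j True + rll_increment k j False = 0"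
    using flip_rate_eq[of k]
    by (cases "j = k") (simp_all add: rll_increment_def rll_step_def rll_potential_def algebra_simps)
  have "j \<le> k"
    using \<open>j \<in> {..k}\<close> by simp
  have "0 \<le> (of_bool (\<not> b \<and> j = k) :: real)" "(of_bool (\<not> b \<and> j = k) :: real) \<le> 1"
    by simp_all
  then show "\<bar>rll_increment k j b\<bar> \<le> 2"
    using rll_potential_bounds[OF \<open>j \<le> k\<close>] rll_potential_bounds[OF rll_step_le[of j k b, OF \<open>j \<le> k\<close>]]
      flip_rate_pos[of k] flip_rate_le[of k]
    unfolding rll_increment_def abs_le_iff by (intro conjI; linarith)
qed

lemma sum_rll_flips_deviation_square_le:
  "(\<Sum>w | length w = n. (real (rll_flips k 0 w) - flip_rate k * n)\<^sup>2) \<le> (8 * real n + 2) * 2 ^ n"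
proof -
  let ?M = "walk_sum (rll_step k) (rll_increment k) 0"
  have "(real (rll_flips k 0 w) - flip_rate k * n)\<^sup>2 \<le> 2 * (?M w)\<^sup>2 + 2" if "length w = n" for w
  proof -
    let ?phi = "rll_potential k (rll_state k 0 w)"
    have deviation: "real (rll_flips k 0 w) - flip_rate k * n = ?M w - ?phi"
      using that by (simp add: walk_sum_rll_increment rll_potential_def)
    have "?phi\<^sup>2 \<le> 1"
      using rll_potential_bounds[OF rll_state_le[of 0 k w]] by (simp add: power_le_one)
    moreover have "(?M w - ?phi)\<^sup>2 = 2 * (?M w)\<^sup>2 + 2 * ?phi\<^sup>2 - (?M w + ?phi)\<^sup>2"
      by (simp add: power2_eq_square algebra_simps)
    ultimately show ?thesis
      unfolding deviation using zero_le_power2[of "?M w + ?phi"] by linarith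
  qed
  then have "(\<Sum>w | length w = n. (real (rll_flips k 0 w) - flip_rate k * n)\<^sup>2)
      \<le> (\<Sum>w | length w = n. 2 * (?M w)\<^sup>2 + 2)"
    by (intro sum_mono) simp
  also have "\<dots> = 2 * (\<Sum>w | length w = n. (?M w)\<^sup>2) + 2 * 2 ^ n"
    by (simp add: sum.distrib sum_distrib_left card_bool_words)
  also have "\<dots> \<le> (8 * real n + 2) * 2 ^ n"
    using rll.sum_walk_sum_square_le[of 0 k n] by (simp add: algebra_simps)
  finally show ?thesis .
qed

lemma prob_rll_flips_deviation_le:
  assumes "0 < t"
  shows "measure_pmf.prob (uniform_marginal n) {w. t \<le> \<bar>real (rll_flips k 0 w) - flip_rate k * n\<bar>}
    \<le> (8 * real n + 2) / t\<^sup>2"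
proof -
  let ?dev = "\<lambda>w. real (rll_flips k 0 w) - flip_rate k * n"
  let ?B = "{w. length w = n} \<inter> {w. t \<le> \<bar>?dev w\<bar>}"
  have "real (card ?B) * t\<^sup>2 = (\<Sum>w\<in>?B. t\<^sup>2)"
    by simp
  also have "\<dots> \<le> (\<Sum>w\<in>?B. (?dev w)\<^sup>2)"
  proof (rule sum_mono)
    fix w assume "w \<in> ?B"
    then have "t\<^sup>2 \<le> \<bar>?dev w\<bar>\<^sup>2"
      using assms by (intro power_mono) auto
    then show "t\<^sup>2 \<le> (?dev w)\<^sup>2"
      by simp
  qed
  also have "\<dots> \<le> (\<Sum>w | length w = n. (?dev w)\<^sup>2)"
    by (intro sum_mono2) (auto simp: finite_bool_words)
  also have "\<dots> \<le> (8 * real n + 2) * 2 ^ n"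
    by (rule sum_rll_flips_deviation_square_le)
  finally have "real (card ?B) * t\<^sup>2 \<le> (8 * real n + 2) * 2 ^ n" .
  moreover have prob_eq: "measure_pmf.prob (uniform_marginal n) {w. t \<le> \<bar>?dev w\<bar>} = card ?B / 2 ^ n"
    by (simp add: uniform_marginal_def measure_pmf_of_set[OF bool_words_nonempty finite_bool_words]
        card_bool_words)
  ultimately show ?thesis
    unfolding prob_eq using assms by (simp add: field_simps)
qed

lemma rll_flips_concentrated:
  assumes "0 < \<delta>"
  shows "(\<lambda>n. measure_pmf.prob (uniform_marginal n)
      {w. \<delta> * real n \<le> \<bar>real (rll_flips k 0 w) - flip_rate k * real n\<bar>}) \<longlonglongrightarrow> 0"
proof (rule tendsto_sandwich[where f = "\<lambda>_. 0"])
  show "eventually (\<lambda>n. measure_pmf.prob (uniform_marginal n)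
      {w. \<delta> * real n \<le> \<bar>real (rll_flips k 0 w) - flip_rate k * real n\<bar>}
      \<le> (8 * real n + 2) / (\<delta> * real n)\<^sup>2) sequentially"
    using eventually_gt_at_top[of 0]
  proof eventually_elim
    case (elim n)
    then show ?case
      using assms by (intro prob_rll_flips_deviation_le) simp
  qed
  show "(\<lambda>n. (8 * real n + 2) / (\<delta> * real n)\<^sup>2) \<longlonglongrightarrow> 0"
    using assms by real_asymp
qed auto

lemma R_words_RLL:
  "R_words \<epsilon> (language (RLL k) n) (language full_shift n) (uniform_marginal n)
    = quantile \<epsilon> (uniform_marginal n) (rll_flips k 0)"
proof -
  have "{w. rll_flips k 0 w \<le> r} \<inter> set_pmf (uniform_marginal n)
      = {w. length w = n \<and> rll_flips k 0 w \<le> r}" for r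
    by (auto simp: uniform_marginal_def set_pmf_of_set[OF bool_words_nonempty finite_bool_words])
  then have "measure_pmf.prob (uniform_marginal n) {w. length w = n \<and> rll_flips k 0 w \<le> r}
      = measure_pmf.prob (uniform_marginal n) {w. rll_flips k 0 w \<le> r}" for r
    by (metis measure_Int_set_pmf)
  then show ?thesis
    unfolding R_words_def quantile_def RLL_neighbourhood by simp
qed

lemma R_shift_RLL:
  assumes "0 < \<epsilon>" and "\<epsilon> < 1"
  shows "R_shift \<epsilon> (RLL k) full_shift uniform_marginal = ereal (flip_rate k)"
proof -
  have "(\<lambda>n. real (quantile \<epsilon> (uniform_marginal n) (rll_flips k 0)) / real n) \<longlonglongrightarrow> flip_rate k"
    using rll_flips_concentrated assms flip_rate_pos[of k]
    by (intro quantile_over_n_tendsto) auto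
  then show ?thesis
    unfolding R_shift_def R_words_RLL by (intro lim_imp_Liminf) (simp_all add: tendsto_ereal)
qed

theorem theorem19:
  fixes k :: nat
  shows "((\<lambda>\<epsilon>. R_shift \<epsilon> (RLL k) full_shift uniform_marginal) \<longlongrightarrow>
            ereal (1 / (2 * (2 ^ (k + 1) - 1)))) (at_right (0::real))"
proof -
  have "eventually (\<lambda>\<epsilon>. R_shift \<epsilon> (RLL k) full_shift uniform_marginal = ereal (flip_rate k))
      (at_right (0::real))"
    using eventually_at_right_real[OF zero_less_one] by eventually_elim (simp add: R_shift_RLL)
  then show ?thesis
    unfolding flip_rate_def by (rule tendsto_eventually)
qed

end
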